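(* Let $A\in\mathrm{SL}(n,\mathbb{C})$ have Jordan canonical form consisting of Jordan blocks $J(\lambda_1,n_1),\dots,J(\lambda_k,n_k)$ (with all $\lambda_i\neq 0$). Then $A$ is $c$-reversible if and only if this collection of blocks can be partitioned into pairs $\{J(\lambda,m),J(\overline{\lambda}^{-1},m)\}$ with $\lambda\in\mathbb{C}\setminus\{0\}$, $|\lambda|\neq 1$, and singletons $\{J(\mu,m)\}$ with $|\mu|=1$.
   Context: $J(\lambda,m)$ denotes the $m\times m$ Jordan block with eigenvalue $\lambda$ ($\lambda$ on the diagonal, $1$ on the superdiagonal, $0$ elsewhere). $\overline{g}$ denotes entrywise complex conjugation. $g\in\mathrm{SL}(n,\mathbb{C})$ is $c$-reversible if there exists $h\in\mathrm{SL}(n,\mathbb{C})$ with $hgh^{-1}=\overline{g}^{-1}$. *)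

theory Defs
  imports Complex_Main "Jordan_Normal_Form.Jordan_Normal_Form" "HOL-Library.Disjoint_Sets"
begin

definition conj_mat :: "complex mat \<Rightarrow> complex mat" where
  "conj_mat A = map_mat cnj A"

definition SL :: "nat \<Rightarrow> complex mat set" where
  "SL n = {A. A \<in> carrier_mat n n \<and> det A = 1}"

definition c_reversible :: "nat \<Rightarrow> complex mat \<Rightarrow> bool" where
  "c_reversible n g \<longleftrightarrow>
     (\<exists>h hinv ginv. h \<in> SL n \<and> hinv \<in> carrier_mat n n \<and> ginv \<in> carrier_mat n n \<and>
        h * hinv = 1\<^sub>m n \<and> hinv * h = 1\<^sub>m n \<and>
        ginv * conj_mat g = 1\<^sub>m n \<and> conj_mat g * ginv = 1\<^sub>m n \<and>
        h * g * hinv = ginv)"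

text \<open>The list of Jordan blocks (size, eigenvalue) can be partitioned into pairs
  {J(lambda,m), J(1/conj lambda, m)} with |lambda| \<noteq> 1 and singletons {J(mu,m)}
  with |mu| = 1.  Blocks are referred to by their index in the list.\<close>
definition blocks_pair_partition :: "(nat \<times> complex) list \<Rightarrow> bool" where
  "blocks_pair_partition n_as \<longleftrightarrow>
     (\<exists>P. partition_on {..<length n_as} P \<and>
        (\<forall>S\<in>P.
           (\<exists>i. S = {i} \<and> cmod (snd (n_as ! i)) = 1) \<or>
           (\<exists>i j. S = {i, j} \<and> i \<noteq> j \<and> fst (n_as ! j) = fst (n_as ! i) \<and>
                  snd (n_as ! i) \<noteq> 0 \<and> cmod (snd (n_as ! i)) \<noteq> 1 \<and>
                  snd (n_as ! j) = inverse (cnj (snd (n_as ! i))))))"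

end

theory Submission
  imports Defs "Jordan_Normal_Form.Jordan_Normal_Form_Uniqueness" "Jordan_Normal_Form.Jordan_Normal_Form_Existence"
begin

text \<open>
  If \<open>h A h\<^sup>-\<^sup>1 = (conj A)\<^sup>-\<^sup>1\<close> then \<open>A\<close> is similar to \<open>(conj A)\<^sup>-\<^sup>1\<close>; conversely
  any similarity in \<open>GL(n,\<complex>)\<close> can be rescaled into \<open>SL(n,\<complex>)\<close> by an \<open>n\<close>-th root of the
  inverse of its determinant. Entrywise conjugation conjugates the eigenvalues of the Jordan
  blocks, and inversion inverts them while preserving the dimensions of the generalised
  eigenspaces, so \<open>(conj A)\<^sup>-\<^sup>1\<close> has the blocks \<open>J(1/conj \<lambda>\<^sub>i, n\<^sub>i)\<close>. As Jordan forms are unique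
  up to permutation of the blocks, \<open>A\<close> is c-reversible iff the multiset of its blocks is
  invariant under the involution \<open>(m, \<lambda>) \<mapsto> (m, 1/conj \<lambda>)\<close>, whose fixed points are the blocks
  with \<open>|\<lambda>| = 1\<close>. Finally, a list is permuted by an involution exactly when its positions split
  into fixed singletons and pairs swapped by the involution.
\<close>

section \<open>Lists permuted by an involution\<close>

definition fixed_or_swapped :: "('a \<Rightarrow> 'a) \<Rightarrow> ('i \<Rightarrow> 'a) \<Rightarrow> 'i set \<Rightarrow> bool" where
  "fixed_or_swapped f g S \<longleftrightarrow>
     (\<exists>i. S = {i} \<and> f (g i) = g i) \<or> (\<exists>i j. S = {i, j} \<and> f (g i) \<noteq> g i \<and> g j = f (g i))"

lemma image_mset_eq_if_fixed_or_swapped: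
  assumes "\<And>x. f (f x) = x" and "fixed_or_swapped f g S"
  shows "image_mset (f \<circ> g) (mset_set S) = image_mset g (mset_set S)"
  using assms(2) unfolding fixed_or_swapped_def
proof (elim disjE exE conjE)
  fix i j assume "S = {i, j}" "f (g i) \<noteq> g i" "g j = f (g i)"
  moreover from this have "i \<noteq> j" by auto
  ultimately show ?thesis using assms(1) by (simp add: add_mset_commute)
qed simp

lemma mset_set_eq_add_Diff:
  assumes "finite I" "S \<subseteq> I"
  shows "mset_set I = mset_set S + mset_set (I - S)"
  using assms by (metis Diff_disjoint Diff_partition finite_Diff finite_subset mset_set_Union)

lemma image_mset_mset_set_Diff_eq:
  assumes "finite I" "S \<subseteq> I"
    and "image_mset h (mset_set I) = image_mset g (mset_set I)"
    and "image_mset h (mset_set S) = image_mset g (mset_set S)"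
  shows "image_mset h (mset_set (I - S)) = image_mset g (mset_set (I - S))"
  using mset_set_eq_add_Diff[OF assms(1,2)] assms(3,4) by simp

lemma image_mset_eq_if_partition:
  assumes "\<And>x. f (f x) = x" and "finite I" and "partition_on I P"
    and "\<forall>S\<in>P. fixed_or_swapped f g S"
  shows "image_mset (f \<circ> g) (mset_set I) = image_mset g (mset_set I)"
proof -
  have "finite P" using assms(2,3) by (rule finite_elements)
  then show ?thesis using assms(2-4)
  proof (induction P arbitrary: I rule: finite_induct)
    case empty
    then show ?case by (simp add: partition_on_def)
  next
    case (insert S P)
    have "disjnt S (\<Union>P)"
      using insert.prems(2) insert.hyps(2)
      by (auto simp: partition_on_def disjoint_def disjnt_def)
    then have part: "partition_on (I - S) P" and "S \<subseteq> I"
      using insert.prems(2) partition_on_insert by blast+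
    have split: "mset_set I = mset_set S + mset_set (I - S)"
      by (rule mset_set_eq_add_Diff[OF insert.prems(1) \<open>S \<subseteq> I\<close>])
    have "image_mset (f \<circ> g) (mset_set S) = image_mset g (mset_set S)"
      using insert.prems(3) by (intro image_mset_eq_if_fixed_or_swapped[OF assms(1)]) simp
    moreover have "image_mset (f \<circ> g) (mset_set (I - S)) = image_mset g (mset_set (I - S))"
      using insert.IH[OF _ part] insert.prems(1,3) by (simp add: comp_def)
    ultimately show ?case by (simp only: split image_mset_union)
  qed
qed

lemma partition_if_image_mset_eq:
  assumes "\<And>x. f (f x) = x" and "finite I"
    and "image_mset (f \<circ> g) (mset_set I) = image_mset g (mset_set I)"
  shows "\<exists>P. partition_on I P \<and> (\<forall>S\<in>P. fixed_or_swapped f g S)"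
  using assms(2,3)
proof (induction I rule: finite_psubset_induct)
  case (psubset I)
  show ?case
  proof (cases "I = {}")
    case True
    then show ?thesis by (simp add: partition_on_empty)
  next
    case False
    then obtain i where i: "i \<in> I" by auto
    obtain S where S: "i \<in> S" "S \<subseteq> I" "fixed_or_swapped f g S"
    proof (cases "f (g i) = g i")
      case True
      then show ?thesis using that[of "{i}"] i by (auto simp: fixed_or_swapped_def)
    next
      case False
      have "f (g i) \<in># image_mset (f \<circ> g) (mset_set I)" using i psubset.hyps(1) by simp
      then obtain j where "j \<in> I" "g j = f (g i)" using psubset.prems psubset.hyps(1) by auto
      then show ?thesis using that[of "{i, j}"] i False by (auto simp: fixed_or_swapped_def)
    qed
    have "image_mset (f \<circ> g) (mset_set (I - S)) = image_mset g (mset_set (I - S))"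
      using psubset.hyps(1) S(2) psubset.prems image_mset_eq_if_fixed_or_swapped[OF assms(1) S(3)]
      by (rule image_mset_mset_set_Diff_eq)
    then obtain P where P: "partition_on (I - S) P" "\<forall>S\<in>P. fixed_or_swapped f g S"
      using psubset.IH[of "I - S"] S(1,2) by blast
    have "partition_on I (insert S P)"
      using P(1) S(1,2) by (subst partition_on_insert) (auto simp: partition_on_def disjnt_def)
    then show ?thesis using P(2) S(3) by blast
  qed
qed

lemma mset_map_eq_iff_fixed_or_swapped_partition:
  assumes "\<And>x. f (f x) = x"
  shows "mset (map f xs) = mset xs \<longleftrightarrow>
    (\<exists>P. partition_on {..<length xs} P \<and> (\<forall>S\<in>P. fixed_or_swapped f ((!) xs) S))"
proof -
  have by_index: "mset (map h xs) = image_mset (h \<circ> (!) xs) (mset_set {..<length xs})" for h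
  proof -
    have "map h xs = map (h \<circ> (!) xs) [0..<length xs]"
      by (metis map_map map_nth)
    then show ?thesis by (simp add: atLeast0LessThan)
  qed
  have "mset xs = image_mset ((!) xs) (mset_set {..<length xs})"
    using by_index[of id] by simp
  then show ?thesis
    unfolding by_index[of f]
    using image_mset_eq_if_partition[OF assms finite_lessThan]
      partition_if_image_mset_eq[OF assms finite_lessThan]
    by metis
qed

section \<open>Generalised eigenspaces of an inverse matrix\<close>

lemma pow_mat_mult_comm:
  fixes A B :: "'a :: semiring_1 mat"
  assumes "A \<in> carrier_mat n n" "B \<in> carrier_mat n n" "A * B = B * A"
  shows "(A * B) ^\<^sub>m k = A ^\<^sub>m k * B ^\<^sub>m k"
proof -
  interpret semiring "ring_mat TYPE('a) n undefined" by (rule semiring_mat)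
  show ?thesis
    using pow_mult_distrib[of A B k] assms
    by (simp add: pow_mat_ring_pow[symmetric] ring_mat_simps)
qed

lemma pow_mat_inverse:
  fixes A B :: "'a :: semiring_1 mat"
  assumes "A \<in> carrier_mat n n" "B \<in> carrier_mat n n" "A * B = 1\<^sub>m n" "B * A = 1\<^sub>m n"
  shows "A ^\<^sub>m k * B ^\<^sub>m k = 1\<^sub>m n"
proof -
  have "(1\<^sub>m n :: 'a mat) ^\<^sub>m k = 1\<^sub>m n" by (induction k) auto
  then show ?thesis using pow_mat_mult_comm[OF assms(1,2), of k] assms(3,4) by simp
qed

lemma kernel_dim_mult_left_invertible:
  fixes A :: "'a :: field mat"
  assumes "A \<in> carrier_mat n n" "U \<in> carrier_mat n n" "V \<in> carrier_mat n n" "V * U = 1\<^sub>m n"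
  shows "kernel_dim (U * A) = kernel_dim A"
  using assms unfolding kernel_dim_def mat_kernel_mult_eq[OF assms] by simp

lemma dim_gen_eigenspace_zero_if_invertible:
  fixes A :: "'a :: field mat"
  assumes "A \<in> carrier_mat n n" "B \<in> carrier_mat n n" "A * B = 1\<^sub>m n" "B * A = 1\<^sub>m n"
  shows "dim_gen_eigenspace A 0 k = 0"
proof -
  have "char_matrix A 0 = A" using assms(1) by (intro eq_matI) (auto simp: char_matrix_def)
  then have "dim_gen_eigenspace A 0 k = kernel_dim (A ^\<^sub>m k * 1\<^sub>m n)"
    using assms(1) by (simp add: dim_gen_eigenspace_def)
  also have "\<dots> = kernel_dim (1\<^sub>m n :: 'a mat)"
    using pow_mat_inverse[OF assms(2,1,4,3)] assms(1,2)
    by (intro kernel_dim_mult_left_invertible[of _ n _ "B ^\<^sub>m k"]) auto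
  also have "\<dots> = 0" using kernel_one_mat by (simp add: kernel_dim_def)
  finally show ?thesis .
qed

lemma char_matrix_inverse:
  fixes A B :: "'a :: field mat"
  assumes A: "A \<in> carrier_mat n n" and B: "B \<in> carrier_mat n n"
    and AB: "A * B = 1\<^sub>m n" and BA: "B * A = 1\<^sub>m n" and "\<mu> \<noteq> 0"
  shows "char_matrix A \<mu> = ((- \<mu>) \<cdot>\<^sub>m A) * char_matrix B (inverse \<mu>)"
    and "((- \<mu>) \<cdot>\<^sub>m A) * char_matrix B (inverse \<mu>) = char_matrix B (inverse \<mu>) * ((- \<mu>) \<cdot>\<^sub>m A)"
proof -
  have smult: "(- inverse \<mu>) \<cdot>\<^sub>m ((- \<mu>) \<cdot>\<^sub>m A) = A" "(- \<mu>) \<cdot>\<^sub>m ((- inverse \<mu>) \<cdot>\<^sub>m A) = A"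
    using \<open>\<mu> \<noteq> 0\<close> by (auto intro!: eq_matI)
  have "((- \<mu>) \<cdot>\<^sub>m A) * char_matrix B (inverse \<mu>) = (- \<mu>) \<cdot>\<^sub>m 1\<^sub>m n + A"
    using A B smult
    by (simp add: char_matrix_def mult_add_distrib_mat[of _ n n _ n] mult_smult_assoc_mat[of _ n n _ n]
        mult_smult_distrib[of _ n n _ n] AB)
  moreover have "char_matrix B (inverse \<mu>) * ((- \<mu>) \<cdot>\<^sub>m A) = (- \<mu>) \<cdot>\<^sub>m 1\<^sub>m n + A"
    using A B smult
    by (simp add: char_matrix_def add_mult_distrib_mat[of _ n n _ _ n] mult_smult_assoc_mat[of _ n n _ n]
        mult_smult_distrib[of _ n n _ n] add_smult_distrib_left_mat[of _ n n] BA)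
  moreover have "char_matrix A \<mu> = (- \<mu>) \<cdot>\<^sub>m 1\<^sub>m n + A"
    using A by (simp add: char_matrix_def comm_add_mat[of _ n n])
  ultimately show "char_matrix A \<mu> = ((- \<mu>) \<cdot>\<^sub>m A) * char_matrix B (inverse \<mu>)"
    and "((- \<mu>) \<cdot>\<^sub>m A) * char_matrix B (inverse \<mu>) = char_matrix B (inverse \<mu>) * ((- \<mu>) \<cdot>\<^sub>m A)"
    by simp_all
qed

lemma dim_gen_eigenspace_inverse:
  fixes A B :: "'a :: field mat"
  assumes A: "A \<in> carrier_mat n n" and B: "B \<in> carrier_mat n n"
    and AB: "A * B = 1\<^sub>m n" and BA: "B * A = 1\<^sub>m n"
  shows "dim_gen_eigenspace A \<mu> k = dim_gen_eigenspace B (inverse \<mu>) k"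
  \<comment> \<open>also for \<open>\<mu> = 0\<close>: then \<open>inverse \<mu> = 0\<close> and both sides vanish\<close>
proof (cases "\<mu> = 0")
  case True
  then show ?thesis
    using dim_gen_eigenspace_zero_if_invertible[OF A B AB BA]
      dim_gen_eigenspace_zero_if_invertible[OF B A BA AB] by simp
next
  case False
  define U where "U = (- \<mu>) \<cdot>\<^sub>m A"
  define C where "C = char_matrix B (inverse \<mu>)"
  have U: "U \<in> carrier_mat n n" and C: "C \<in> carrier_mat n n"
    unfolding U_def C_def using A B by auto
  have "(- inverse \<mu>) \<cdot>\<^sub>m B * U = 1\<^sub>m n" "U * ((- inverse \<mu>) \<cdot>\<^sub>m B) = 1\<^sub>m n"
    unfolding U_def using A B AB BA False
    by (auto simp: mult_smult_assoc_mat[of _ n n _ n] mult_smult_distrib[of _ n n _ n] intro!: eq_matI)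
  then have inv: "((- inverse \<mu>) \<cdot>\<^sub>m B) ^\<^sub>m k * U ^\<^sub>m k = 1\<^sub>m n"
    using B U by (intro pow_mat_inverse) auto
  have "dim_gen_eigenspace A \<mu> k = kernel_dim ((U * C) ^\<^sub>m k)"
    unfolding dim_gen_eigenspace_def U_def C_def char_matrix_inverse(1)[OF A B AB BA False] ..
  also have "\<dots> = kernel_dim (U ^\<^sub>m k * C ^\<^sub>m k)"
    unfolding pow_mat_mult_comm[OF U C char_matrix_inverse(2)[OF A B AB BA False, folded U_def C_def]] ..
  also have "\<dots> = kernel_dim (C ^\<^sub>m k)"
    using inv U C B by (intro kernel_dim_mult_left_invertible) auto
  finally show ?thesis unfolding dim_gen_eigenspace_def C_def .
qed

section \<open>Jordan normal forms up to permutation of the blocks\<close>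

lemma (in comm_ring_hom) similar_mat_hom:
  assumes "similar_mat A B"
  shows "similar_mat (mat\<^sub>h A) (mat\<^sub>h B)"
proof -
  from assms obtain n P Q where wit: "{A, B, P, Q} \<subseteq> carrier_mat n n"
    "P * Q = 1\<^sub>m n" "Q * P = 1\<^sub>m n" "A = P * B * Q"
    by (auto dest: similar_matD)
  show ?thesis
  proof (rule similar_matI[of _ _ "mat\<^sub>h P" "mat\<^sub>h Q" n])
    show "mat\<^sub>h P * mat\<^sub>h Q = 1\<^sub>m n" "mat\<^sub>h Q * mat\<^sub>h P = 1\<^sub>m n"
      using wit by (metis insert_subset mat_hom_mult mat_hom_one)+
    show "mat\<^sub>h A = mat\<^sub>h P * mat\<^sub>h B * mat\<^sub>h Q"
      using wit by (metis insert_subset mat_hom_mult mult_carrier_mat)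
  qed (use wit in auto)
qed

lemma (in comm_ring_hom) jordan_matrix_hom:
  "mat\<^sub>h (jordan_matrix n_as) = jordan_matrix (map (\<lambda>(n, a). (n, hom a)) n_as)"
proof (induction n_as)
  case Nil
  show ?case by (intro eq_matI) (auto simp: jordan_matrix_def)
next
  case (Cons na n_as)
  obtain n a where "na = (n, a)" by force
  moreover have "sum_list (map fst (map (\<lambda>(n, a). (n, hom a)) n_as)) = sum_list (map fst n_as)"
    by (induction n_as) auto
  moreover have "mat\<^sub>h (jordan_block n a) = jordan_block n (hom a)"
    by (intro eq_matI) auto
  moreover have "mat\<^sub>h (0\<^sub>m r c) = 0\<^sub>m r c" for r c
    by (intro eq_matI) auto
  ultimately show ?case
    using Cons.IH by (simp add: jordan_matrix_Cons map_four_block_mat[OF jordan_block_carrier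
          zero_carrier_mat zero_carrier_mat jordan_matrix_carrier])
qed

lemma (in comm_ring_hom) jordan_nf_hom:
  assumes "jordan_nf A n_as"
  shows "jordan_nf (mat\<^sub>h A) (map (\<lambda>(n, a). (n, hom a)) n_as)"
  using assms similar_mat_hom unfolding jordan_nf_def jordan_matrix_hom[symmetric]
  by (force simp: image_image case_prod_beta)

lemma jordan_nf_jordan_matrix:
  "0 \<notin> fst ` set n_as \<Longrightarrow> jordan_nf (jordan_matrix n_as) n_as"
  unfolding jordan_nf_def by (auto intro: similar_mat_refl[OF jordan_matrix_carrier])

lemma jordan_nf_mset_eq:
  fixes A B :: "'a :: field mat"
  assumes "jordan_nf A n_as" and "jordan_nf B m_bs"
    and "dim_gen_eigenspace A = dim_gen_eigenspace B"
  shows "mset n_as = mset m_bs"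
proof (rule multiset_eqI)
  fix x :: "nat \<times> 'a"
  obtain k \<mu> where x: "x = (k, \<mu>)" by force
  show "count (mset n_as) x = count (mset m_bs) x"
  proof (cases "k = 0")
    case True
    then show ?thesis using assms(1,2) x unfolding jordan_nf_def
      by (metis count_mset_0_iff fst_conv image_eqI)
  next
    case False
    have "compute_nr_of_jordan_blocks A \<mu> k = compute_nr_of_jordan_blocks B \<mu> k"
      unfolding compute_nr_of_jordan_blocks_def assms(3) ..
    then show ?thesis
      unfolding x count_mset count_list_eq_length_filter
        compute_nr_of_jordan_blocks[OF assms(1) False] compute_nr_of_jordan_blocks[OF assms(2) False] .
  qed
qed

lemma jordan_matrix_append:
  "jordan_matrix (xs @ ys) = four_block_mat (jordan_matrix xs)
     (0\<^sub>m (sum_list (map fst xs)) (sum_list (map fst ys)))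
     (0\<^sub>m (sum_list (map fst ys)) (sum_list (map fst xs))) (jordan_matrix ys)"
  unfolding jordan_matrix_def map_append diag_block_mat_append Let_def
  by (simp add: jordan_matrix_def[symmetric])

lemma four_block_mat_swap_similar:
  fixes A :: "'a :: comm_ring_1 mat"
  assumes A: "A \<in> carrier_mat a a" and B: "B \<in> carrier_mat b b"
  shows "similar_mat (four_block_mat A (0\<^sub>m a b) (0\<^sub>m b a) B) (four_block_mat B (0\<^sub>m b a) (0\<^sub>m a b) A)"
proof -
  define P where "P = four_block_mat (0\<^sub>m a b) (1\<^sub>m a) (1\<^sub>m b) (0\<^sub>m b a :: 'a mat)"
  define Q where "Q = four_block_mat (0\<^sub>m b a) (1\<^sub>m b) (1\<^sub>m a) (0\<^sub>m a b :: 'a mat)"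
  have mult: "four_block_mat (0\<^sub>m r s) (1\<^sub>m r) (1\<^sub>m s) (0\<^sub>m s r) * four_block_mat X (0\<^sub>m s r) (0\<^sub>m r s) Y
      = four_block_mat (0\<^sub>m r s) Y X (0\<^sub>m s r)"
    if "X \<in> carrier_mat s s" "Y \<in> carrier_mat r r" for r s and X Y :: "'a mat"
    using that by (subst mult_four_block_mat[OF zero_carrier_mat one_carrier_mat one_carrier_mat
          zero_carrier_mat that(1) zero_carrier_mat zero_carrier_mat that(2)]) auto
  show ?thesis
  proof (rule similar_matI[of _ _ P Q "a + b"])
    show "P * Q = 1\<^sub>m (a + b)" "Q * P = 1\<^sub>m (a + b)"
      unfolding P_def Q_def
      by (subst mult_four_block_mat[OF zero_carrier_mat one_carrier_mat one_carrier_mat zero_carrier_mat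
            zero_carrier_mat one_carrier_mat one_carrier_mat zero_carrier_mat], auto simp: add.commute)+
    show "four_block_mat A (0\<^sub>m a b) (0\<^sub>m b a) B = P * four_block_mat B (0\<^sub>m b a) (0\<^sub>m a b) A * Q"
      using mult[OF B A] A B unfolding P_def Q_def
      by (simp add: mult_four_block_mat[OF zero_carrier_mat A B zero_carrier_mat
            zero_carrier_mat one_carrier_mat one_carrier_mat zero_carrier_mat])
  qed (use A B in \<open>auto simp: P_def Q_def add.commute\<close>)
qed

lemma jordan_matrix_append_swap_similar:
  "similar_mat (jordan_matrix (xs @ ys)) (jordan_matrix (ys @ xs :: (nat \<times> 'a :: comm_ring_1) list))"
  unfolding jordan_matrix_append by (rule four_block_mat_swap_similar) auto

lemma jordan_matrix_similar_if_mset_eq: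
  fixes n_as :: "(nat \<times> 'a :: comm_ring_1) list"
  assumes "mset n_as = mset m_bs"
  shows "similar_mat (jordan_matrix n_as) (jordan_matrix m_bs)"
  using assms
proof (induction n_as arbitrary: m_bs)
  case Nil
  then show ?case by (auto intro: similar_mat_refl[OF jordan_matrix_carrier])
next
  case (Cons x n_as)
  obtain us vs where m_bs: "m_bs = us @ x # vs"
    using Cons.prems by (metis list.set_intros(1) set_mset_mset split_list)
  then have "mset n_as = mset (us @ vs)" using Cons.prems by simp
  moreover from this have "sum_list (map fst (us @ vs)) = sum_list (map fst n_as)"
    by (metis mset_map sum_mset_sum_list)
  ultimately have "similar_mat (jordan_matrix (x # n_as)) (jordan_matrix (x # us @ vs))"
    using Cons.IH by (cases x)
      (auto simp: jordan_matrix_Cons intro!: similar_mat_four_block_0_0 similar_mat_refl[OF jordan_block_carrier])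
  moreover have "similar_mat (jordan_matrix (([x] @ us) @ vs)) (jordan_matrix ((us @ [x]) @ vs))"
  proof -
    have sum: "sum_list (map fst (us @ [x])) = sum_list (map fst ([x] @ us))" by simp
    show ?thesis
      unfolding jordan_matrix_append[of "[x] @ us"] jordan_matrix_append[of "us @ [x]"] sum
      by (rule similar_mat_four_block_0_0[OF jordan_matrix_append_swap_similar similar_mat_refl]) auto
  qed
  ultimately show ?case using m_bs similar_mat_trans by auto
qed

lemma jordan_nf_similar_iff_mset_eq:
  fixes A B :: "'a :: field mat"
  assumes "jordan_nf A n_as" and "jordan_nf B m_bs"
  shows "similar_mat A B \<longleftrightarrow> mset n_as = mset m_bs"
proof
  assume "similar_mat A B"
  then show "mset n_as = mset m_bs"
    using assms dim_gen_eigenspace_similar by (blast intro: jordan_nf_mset_eq)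
next
  assume "mset n_as = mset m_bs"
  then have "similar_mat (jordan_matrix n_as) (jordan_matrix m_bs)"
    by (rule jordan_matrix_similar_if_mset_eq)
  then show "similar_mat A B"
    using assms unfolding jordan_nf_def by (meson similar_mat_sym similar_mat_trans)
qed

lemma jordan_nf_inverse:
  fixes A B :: "complex mat"
  assumes A: "A \<in> carrier_mat n n" and B: "B \<in> carrier_mat n n"
    and AB: "A * B = 1\<^sub>m n" and BA: "B * A = 1\<^sub>m n" and jnf: "jordan_nf A n_as"
  shows "jordan_nf B (map (\<lambda>(m, a). (m, inverse a)) n_as)"
proof -
  let ?inv_as = "map (\<lambda>(m, a). (m, inverse a)) n_as"
  obtain m_bs where jnf_B: "jordan_nf B m_bs"
    using char_poly_factorized[OF B] jordan_nf_exists[OF B] by blast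
  have sizes: "0 \<notin> fst ` set ?inv_as"
    using jnf by (force simp: jordan_nf_def)
  have "dim_gen_eigenspace B \<mu> k = dim_gen_eigenspace (jordan_matrix ?inv_as) \<mu> k" for \<mu> k
  proof -
    have inverse_eq: "inverse e = \<mu> \<longleftrightarrow> e = inverse \<mu>" for e :: complex
      by (metis inverse_inverse_eq)
    have "dim_gen_eigenspace B \<mu> k = dim_gen_eigenspace A (inverse \<mu>) k"
      by (rule dim_gen_eigenspace_inverse[OF B A BA AB])
    also have "\<dots> = (\<Sum>m \<leftarrow> map fst [(m, e) \<leftarrow> n_as. e = inverse \<mu>]. min k m)"
      by (rule dim_gen_eigenspace[OF jnf])
    also have "\<dots> = (\<Sum>m \<leftarrow> map fst [(m, e) \<leftarrow> ?inv_as. e = \<mu>]. min k m)"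
      by (induction n_as) (auto simp: inverse_eq)
    also have "\<dots> = dim_gen_eigenspace (jordan_matrix ?inv_as) \<mu> k"
      by (rule dim_gen_eigenspace_jordan_matrix[symmetric])
    finally show ?thesis .
  qed
  then have "mset m_bs = mset ?inv_as"
    using jordan_nf_mset_eq[OF jnf_B jordan_nf_jordan_matrix[OF sizes]] by blast
  then show ?thesis
    using jnf_B sizes unfolding jordan_nf_def
    by (meson jordan_matrix_similar_if_mset_eq similar_mat_trans)
qed

section \<open>c-reversibility\<close>

lemma similar_mat_wit_det_one:
  fixes A B :: "complex mat"
  assumes "similar_mat A B"
  obtains P Q where "similar_mat_wit A B P Q" and "det P = 1"
proof -
  from assms obtain P Q where wit: "similar_mat_wit A B P Q"
    unfolding similar_mat_def by blast
  define n where "n = dim_row A"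
  note PQ = similar_mat_witD[OF n_def wit]
  have "det P * det Q = 1"
    using PQ by (metis det_mult det_one)
  then have det_P: "det P \<noteq> 0" by auto
  obtain c where c: "c \<noteq> 0" "c ^ n * det P = 1"
  proof (cases "n = 0")
    case True
    then show ?thesis using that[of 1] PQ(6) by (simp add: det_def)
  next
    case False
    then obtain c where "c ^ n = inverse (det P)" using nth_root_exists by blast
    moreover from this have "c \<noteq> 0" using det_P False by (cases "c = 0") (auto simp: power_0_left)
    ultimately show ?thesis using that[of c] det_P by simp
  qed
  have cancel: "c \<cdot>\<^sub>m (inverse c \<cdot>\<^sub>m M) = M" "inverse c \<cdot>\<^sub>m (c \<cdot>\<^sub>m M) = M" for M :: "complex mat"
    using c(1) by (auto intro!: eq_matI)
  show ?thesis
  proof (rule that)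
    show "similar_mat_wit A B (c \<cdot>\<^sub>m P) (inverse c \<cdot>\<^sub>m Q)"
      using PQ by (intro similar_mat_witI[of _ _ n])
        (auto simp: mult_smult_assoc_mat[of _ n n _ n] mult_smult_distrib[of _ n n _ n] cancel)
    show "det (c \<cdot>\<^sub>m P) = 1"
      using PQ c(2) by simp
  qed
qed

interpretation cnj_hom: comm_ring_hom cnj
  by unfold_locales auto

definition cnj_inverse_block :: "nat \<times> complex \<Rightarrow> nat \<times> complex" where
  "cnj_inverse_block = (\<lambda>(m, a). (m, inverse (cnj a)))"

lemma cnj_inverse_block_involution: "cnj_inverse_block (cnj_inverse_block b) = b"
  by (simp add: cnj_inverse_block_def case_prod_beta)

lemma eq_cnj_inverse_block_iff:
  "c = cnj_inverse_block b \<longleftrightarrow> fst c = fst b \<and> snd c = inverse (cnj (snd b))"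
  by (simp add: cnj_inverse_block_def case_prod_beta prod_eq_iff)

lemma inverse_cnj_eq_self_iff:
  fixes a :: complex
  assumes "a \<noteq> 0"
  shows "inverse (cnj a) = a \<longleftrightarrow> cmod a = 1"
proof -
  have "inverse (cnj a) = a \<longleftrightarrow> a * cnj a = 1"
    using assms by (auto simp: field_simps)
  also have "\<dots> \<longleftrightarrow> cmod a ^ 2 = 1"
    by (metis complex_norm_square of_real_eq_1_iff)
  also have "\<dots> \<longleftrightarrow> cmod a = 1"
    by (smt (verit) norm_ge_zero power2_eq_1_iff)
  finally show ?thesis .
qed

lemma cnj_inverse_block_eq_self_iff:
  assumes "snd b \<noteq> 0"
  shows "cnj_inverse_block b = b \<longleftrightarrow> cmod (snd b) = 1"
  using assms by (cases b) (simp add: cnj_inverse_block_def inverse_cnj_eq_self_iff)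

lemma blocks_pair_partition_iff_mset_map_eq:
  assumes "\<forall>b\<in>set n_as. snd b \<noteq> 0"
  shows "blocks_pair_partition n_as \<longleftrightarrow> mset (map cnj_inverse_block n_as) = mset n_as"
proof -
  have nonzero: "snd (n_as ! i) \<noteq> 0" if "i < length n_as" for i
    using assms nth_mem[OF that] by blast
  have fixed: "cmod (snd (n_as ! i)) = 1 \<longleftrightarrow> cnj_inverse_block (n_as ! i) = n_as ! i"
    if "i < length n_as" for i
    using cnj_inverse_block_eq_self_iff[OF nonzero[OF that]] by simp
  have pair: "i \<noteq> j \<and> fst (n_as ! j) = fst (n_as ! i) \<and> snd (n_as ! i) \<noteq> 0 \<and>
        cmod (snd (n_as ! i)) \<noteq> 1 \<and> snd (n_as ! j) = inverse (cnj (snd (n_as ! i))) \<longleftrightarrow>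
      cnj_inverse_block (n_as ! i) \<noteq> n_as ! i \<and> n_as ! j = cnj_inverse_block (n_as ! i)"
    if "i < length n_as" for i j
    using fixed[OF that] nonzero[OF that] eq_cnj_inverse_block_iff[of "n_as ! j" "n_as ! i"]
    by (cases "i = j") auto
  have part: "((\<exists>i. S = {i} \<and> cmod (snd (n_as ! i)) = 1) \<or>
      (\<exists>i j. S = {i, j} \<and> i \<noteq> j \<and> fst (n_as ! j) = fst (n_as ! i) \<and>
             snd (n_as ! i) \<noteq> 0 \<and> cmod (snd (n_as ! i)) \<noteq> 1 \<and>
             snd (n_as ! j) = inverse (cnj (snd (n_as ! i))))) \<longleftrightarrow>
      fixed_or_swapped cnj_inverse_block ((!) n_as) S"
    if S: "S \<subseteq> {..<length n_as}" for S
    unfolding fixed_or_swapped_def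
    by (intro disj_cong ex_cong1 conj_cong[OF refl] fixed pair) (use S in auto)
  show ?thesis
    unfolding mset_map_eq_iff_fixed_or_swapped_partition[OF cnj_inverse_block_involution]
      blocks_pair_partition_def
    by (intro ex_cong1 conj_cong[OF refl] ball_cong[OF refl] part) (auto dest: partition_onD1)
qed

lemma jordan_nf_inverse_conj_mat:
  assumes "A \<in> carrier_mat n n" and G: "G \<in> carrier_mat n n"
    and "G * conj_mat A = 1\<^sub>m n" "conj_mat A * G = 1\<^sub>m n" and "jordan_nf A n_as"
  shows "jordan_nf G (map cnj_inverse_block n_as)"
proof -
  have "conj_mat A \<in> carrier_mat n n" using assms(1) by (simp add: conj_mat_def)
  moreover have "jordan_nf (conj_mat A) (map (\<lambda>(m, a). (m, cnj a)) n_as)"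
    unfolding conj_mat_def by (rule cnj_hom.jordan_nf_hom) fact
  ultimately have "jordan_nf G (map (\<lambda>(m, a). (m, inverse a)) (map (\<lambda>(m, a). (m, cnj a)) n_as))"
    using G assms(3,4) by (intro jordan_nf_inverse)
  then show ?thesis by (simp add: cnj_inverse_block_def split_def comp_def)
qed

lemma c_reversible_iff_similar:
  assumes A: "A \<in> SL n" and G: "G \<in> carrier_mat n n"
    and GA: "G * conj_mat A = 1\<^sub>m n" and AG: "conj_mat A * G = 1\<^sub>m n"
  shows "c_reversible n A \<longleftrightarrow> similar_mat A G"
proof
  assume "c_reversible n A"
  then obtain h hinv G' where h: "h \<in> SL n" "hinv \<in> carrier_mat n n" "G' \<in> carrier_mat n n"
    "h * hinv = 1\<^sub>m n" "hinv * h = 1\<^sub>m n" "G' * conj_mat A = 1\<^sub>m n" "h * A * hinv = G'"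
    unfolding c_reversible_def by blast
  have cA: "conj_mat A \<in> carrier_mat n n" using A by (simp add: SL_def conj_mat_def)
  have "G' = G' * (conj_mat A * G)" using h(3) by (simp add: AG)
  also have "\<dots> = G" using h(3,6) cA G by (simp add: assoc_mult_mat[symmetric, of _ n n _ n _ n])
  finally have "similar_mat G A"
    using h A G by (intro similar_matI[of _ _ h hinv n]) (auto simp: SL_def)
  then show "similar_mat A G" by (rule similar_mat_sym)
next
  assume "similar_mat A G"
  then obtain P Q where wit: "similar_mat_wit G A P Q" and "det P = 1"
    by (metis similar_mat_sym similar_mat_wit_det_one)
  with similar_mat_witD2[OF G wit] G GA AG show "c_reversible n A"
    unfolding c_reversible_def SL_def by (intro exI[of _ P] exI[of _ Q] exI[of _ G]) auto
qed

theorem proposition3p1: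
  fixes A :: "complex mat" and n :: nat and n_as :: "(nat \<times> complex) list"
  assumes "A \<in> SL n"
    and "jordan_nf A n_as"
    and "\<forall>b \<in> set n_as. snd b \<noteq> 0"
  shows "c_reversible n A \<longleftrightarrow> blocks_pair_partition n_as"
proof -
  have A: "A \<in> carrier_mat n n" "det A = 1" using assms(1) unfolding SL_def by auto
  then have "conj_mat A \<in> Units (ring_mat TYPE(complex) n undefined)"
    by (intro det_non_zero_imp_unit) (auto simp: conj_mat_def)
  then obtain G where G: "G \<in> carrier_mat n n" "G * conj_mat A = 1\<^sub>m n" "conj_mat A * G = 1\<^sub>m n"
    unfolding Units_def by (auto simp: ring_mat_simps)
  have "c_reversible n A \<longleftrightarrow> similar_mat A G"
    by (rule c_reversible_iff_similar[OF assms(1) G])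
  also have "\<dots> \<longleftrightarrow> mset n_as = mset (map cnj_inverse_block n_as)"
    by (rule jordan_nf_similar_iff_mset_eq[OF assms(2) jordan_nf_inverse_conj_mat[OF A(1) G assms(2)]])
  also have "\<dots> \<longleftrightarrow> blocks_pair_partition n_as"
    using blocks_pair_partition_iff_mset_map_eq[OF assms(3)] by auto
  finally show ?thesis .
qed

end
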